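(* Consider the genus 3 setting described in the context (curve $y^2=x^7+p_4x^3+p_5x^2+p_6x+p_7$, Lax operator $L$ in Tyurin parametrization with gauge $\alpha_5=(1,0)^T$, $\alpha_6=(0,1)^T$, Hamiltonian $H$). Let $Z$ be the subvariety defined by $$\alpha_{11}=\alpha_{22}=\alpha_{13}=\alpha_{24}=0,\qquad \beta_1=\beta_2=\beta_3=\beta_4=0,\ \beta_{25}=\beta_{16}=0.$$ Then $Z$ is invariant under the Hamiltonian flow of $H$: at every point of $Z$ (where defined), $\partial H/\partial\beta_{11}=\partial H/\partial\beta_{22}=\partial H/\partial\beta_{13}=\partial H/\partial\beta_{24}=0$ and $\partial H/\partial\alpha_{ij}=0$ for all $i\in\{1,2\}$, $j\in\{1,2,3,4\}$. Moreover the restriction of $H$ to $Z$ equals $$G(a_1,a_3,a_6;\kappa_1,\kappa_3,\kappa_6)+G(a_2,a_4,a_5;\kappa_2,\kappa_4,\kappa_5),$$ where for pairwise distinct $u_1,u_2,u_3$ and $D=(u_1-u_2)(u_1-u_3)(u_2-u_3)$, $$G(u_1,u_2,u_3;k_1,k_2,k_3)=\frac{\big(u_3^2(k_2-k_1)+u_2^2(k_1-k_3)+u_1^2(k_3-k_2)\big)^2}{D^2}+\frac{2\big(u_3(k_2-k_1)+u_2(k_1-k_3)+u_1(k_3-k_2)\big)\big(u_3^2(u_1k_2-u_2k_1)+u_2^2(u_3k_1-u_1k_3)+u_1^2(u_2k_3-u_3k_2)\big)}{D^2}.$$ Thus the reduced dynamics of $(a_1,a_3,a_6,\kappa_1,\kappa_3,\kappa_6)$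 and of $(a_2,a_4,a_5,\kappa_2,\kappa_4,\kappa_5)$ are two independent canonical Hamiltonian systems.
   Context: Let $\Sigma$ be the genus 3 hyperelliptic curve $y^2=P(x)=x^7+p_4x^3+p_5x^2+p_6x+p_7$ (coefficients $p_1=p_2=p_3$ of $x^6,x^5,x^4$ equal to $0$). Dynamical variables: points $(a_s,b_s)\in\Sigma$, $s=1,\dots,6$, with pairwise distinct $a_s$ ($b_s$ a local branch of $\sqrt{P(a_s)}$, a function of $a_s$); numbers $\kappa_1,\dots,\kappa_6$; vectors $\alpha_j=(\alpha_{1j},\alpha_{2j})^T$, $\beta_j=(\beta_{1j},\beta_{2j})^T$ for $j=1,\dots,4$, $\beta_5=(0,\beta_{25})^T$, $\beta_6=(\beta_{16},0)^T$, and gauge-fixed $\alpha_5=(1,0)^T$, $\alpha_6=(0,1)^T$. The Lax operator is $$L(x,y)=A_0+A_1x+A_2x^2+\sum_{s=1}^6\alpha_s\beta_s^T\frac{y+b_s}{x-a_s},$$ where the $2\times2$ matrices $A_0,A_1,A_2$ are determined (rationally, for generic values) by the twelve scalar linear equations $L(a_s,b_s)\alpha_s=\kappa_s\alpha_s$, $s=1,\dots,6$, in which the singular summand with index $s$ is omitted from $L(a_s,b_s)$. Near $x=\infty$ use $x=z^{-2}$, $y=z^{-7}(1+p_4z^8+p_5z^{10}+p_6z^{12}+p_7z^{14})^{1/2}$ (branch equal to $1$ at $z=0$). The Hamiltonian (denoted $H_{2,4}$ in the paper) is $$H=\operatorname{res}_{z=0}\, z^{-4}\,y(z)^{-1}\,\operatorname{tr}\big(L(x(z),y(z))^2\big)\,dz.$$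 Hamiltonian equations: $\dot a_s=\partial H/\partial\kappa_s$, $\dot\kappa_s=-\partial H/\partial a_s$, $\dot\alpha_{ij}=\partial H/\partial\beta_{ij}$, $\dot\beta_{ij}=-\partial H/\partial\alpha_{ij}$ for $i\in\{1,2\}$, $j\in\{1,\dots,4\}$, and $\dot\beta_{25}=\dot\beta_{16}=0$ (conjugate variables fixed by the gauge). *)

theory Defs
  imports "HOL-Analysis.Analysis" "HOL-Computational_Algebra.Formal_Laurent_Series"
begin

text \<open>Indices: s,j \<in> {1..6} for points, i \<in> {1,2} for vector/matrix rows.
  alpha i j = \<alpha>_{ij} (i-th component of \<alpha>_j), beta i j = \<beta>_{ij}.
  The coefficient matrices A_0,A_1,A_2 are encoded as Am :: nat \<Rightarrow> nat \<Rightarrow> nat \<Rightarrow> complex,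
  Am k i j = (A_k)_{ij}, with Am k i j = 0 outside k \<le> 2, i,j \<in> {1,2}.\<close>

definition curveP :: "complex \<Rightarrow> complex \<Rightarrow> complex \<Rightarrow> complex \<Rightarrow> complex \<Rightarrow> complex" where
  "curveP p4 p5 p6 p7 x = x^7 + p4 * x^3 + p5 * x^2 + p6 * x + p7"

text \<open>The twelve scalar equations L(a_s,b_s) \<alpha>_s = \<kappa>_s \<alpha>_s (s-th singular summand omitted),
  together with the normalisation that Am vanishes outside the relevant index range.\<close>
definition lax_eqs ::
  "(nat \<Rightarrow> complex) \<Rightarrow> (nat \<Rightarrow> complex) \<Rightarrow> (nat \<Rightarrow> complex) \<Rightarrow>
   (nat \<Rightarrow> nat \<Rightarrow> complex) \<Rightarrow> (nat \<Rightarrow> nat \<Rightarrow> complex) \<Rightarrow>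
   (nat \<Rightarrow> nat \<Rightarrow> nat \<Rightarrow> complex) \<Rightarrow> bool" where
  "lax_eqs a b \<kappa> \<alpha> \<beta> Am \<longleftrightarrow>
     (\<forall>k i j. (k > 2 \<or> i \<notin> {1,2} \<or> j \<notin> {1,2}) \<longrightarrow> Am k i j = 0) \<and>
     (\<forall>s\<in>{1..6}. \<forall>i\<in>{1,2::nat}.
        (\<Sum>j\<in>{1,2}. ((\<Sum>k\<le>2. Am k i j * a s ^ k)
            + (\<Sum>r\<in>{1..6} - {s}. \<alpha> i r * \<beta> j r * (b s + b r) / (a s - a r))) * \<alpha> j s)
        = \<kappa> s * \<alpha> i s)"

definition lax_defined where
  "lax_defined a b \<kappa> \<alpha> \<beta> \<longleftrightarrow> (\<exists>!Am. lax_eqs a b \<kappa> \<alpha> \<beta> Am)"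

definition lax_A where
  "lax_A a b \<kappa> \<alpha> \<beta> = (THE Am. lax_eqs a b \<kappa> \<alpha> \<beta> Am)"

text \<open>Local parameter at infinity: x = z^{-2}, y = z^{-7} (1+p4 z^8+p5 z^10+p6 z^12+p7 z^14)^{1/2}.\<close>
definition xz :: "complex fls" where
  "xz = fls_X_inv ^ 2"

definition sqrt_ser :: "complex \<Rightarrow> complex \<Rightarrow> complex \<Rightarrow> complex \<Rightarrow> complex fps" where
  "sqrt_ser p4 p5 p6 p7 =
     (THE s. s ^ 2 = 1 + fps_const p4 * fps_X ^ 8 + fps_const p5 * fps_X ^ 10
                       + fps_const p6 * fps_X ^ 12 + fps_const p7 * fps_X ^ 14
             \<and> s $ 0 = 1)"

definition yz :: "complex \<Rightarrow> complex \<Rightarrow> complex \<Rightarrow> complex \<Rightarrow> complex fls" where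
  "yz p4 p5 p6 p7 = fls_X_inv ^ 7 * fps_to_fls (sqrt_ser p4 p5 p6 p7)"

definition Lz where
  "Lz p4 p5 p6 p7 a b \<kappa> \<alpha> \<beta> i j =
     (\<Sum>k\<le>2. fls_const (lax_A a b \<kappa> \<alpha> \<beta> k i j) * xz ^ k)
     + (\<Sum>s\<in>{1..6}. fls_const (\<alpha> i s * \<beta> j s) * (yz p4 p5 p6 p7 + fls_const (b s))
                      * inverse (xz - fls_const (a s)))"

definition Ham where
  "Ham p4 p5 p6 p7 a b \<kappa> \<alpha> \<beta> =
     fls_residue (fls_X_inv ^ 4 * inverse (yz p4 p5 p6 p7) *
        (\<Sum>i\<in>{1,2::nat}. \<Sum>j\<in>{1,2::nat}.
            Lz p4 p5 p6 p7 a b \<kappa> \<alpha> \<beta> i j * Lz p4 p5 p6 p7 a b \<kappa> \<alpha> \<beta> j i))"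

definition Gfun :: "complex \<Rightarrow> complex \<Rightarrow> complex \<Rightarrow> complex \<Rightarrow> complex \<Rightarrow> complex \<Rightarrow> complex" where
  "Gfun u1 u2 u3 k1 k2 k3 =
     (let D = (u1 - u2) * (u1 - u3) * (u2 - u3) in
      (u3^2 * (k2 - k1) + u2^2 * (k1 - k3) + u1^2 * (k3 - k2))^2 / D^2
      + 2 * (u3 * (k2 - k1) + u2 * (k1 - k3) + u1 * (k3 - k2))
          * (u3^2 * (u1 * k2 - u2 * k1) + u2^2 * (u3 * k1 - u1 * k3) + u1^2 * (u2 * k3 - u3 * k2))
          / D^2)"

end

theory Submission
  imports Defs
begin

text \<open>On Z every \<beta> vanishes, so L = A_0 + A_1 x + A_2 x^2 and each \<alpha>_s is an eigenvector of
  A(a_s) with eigenvalue \<kappa>_s. In the gauge, \<alpha>_s is a multiple of e_1 for s = 2, 4, 5 and of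
  e_2 for s = 1, 3, 6, so the first column of A(x) is obtained by quadratic interpolation at
  a_2, a_4, a_5 and the second at a_1, a_3, a_6: A is diagonal, its entries interpolating \<kappa>.
  Since 1/y = z^7 (1 + O(z^8)), the residue extracts 2 c_0 c_2 + c_1^2 from the square of each
  diagonal entry c_0 + c_1 x + c_2 x^2, and this is G.
  Moving one of the listed coordinates keeps L triangular with the same diagonal: either some
  \<alpha>_s acquires a second component, which only changes an off-diagonal entry, or the singular
  part of L lives in a single off-diagonal entry. Hence H is locally constant along each of
  these coordinates.\<close>

section \<open>Expansion at infinity\<close>

lemma fps_X_power_dvd_nth:
  fixes f :: "'a::comm_ring_1 fps"
  assumes "fps_X ^ N dvd f" "n < N"
  shows "f $ n = 0"
proof -
  from assms(1) obtain g where "f = fps_X ^ N * g" by (elim dvdE)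
  with assms(2) show ?thesis by (simp add: fps_X_power_mult_nth)
qed

lemma fps_X_power_dvd_inverse_sqrt:
  fixes s :: "'a::field_char_0 fps"
  assumes s0: "s $ 0 = 1" and sq: "fps_X ^ N dvd s ^ 2 - 1"
  shows "fps_X ^ N dvd inverse s - 1"
proof -
  have "(s + 1) $ 0 \<noteq> 0" using s0 by simp
  then have "s - 1 = (s - 1) * (s + 1) * inverse (s + 1)"
    by (simp add: mult.assoc inverse_mult_eq_1')
  also have "\<dots> = (s ^ 2 - 1) * inverse (s + 1)"
    by (simp add: power2_eq_square algebra_simps)
  finally have "fps_X ^ N dvd s - 1" using sq by simp
  moreover have "inverse s - 1 = (s - 1) * - inverse s"
    using s0 by (simp add: algebra_simps inverse_mult_eq_1')
  ultimately show ?thesis by (metis dvd_mult2)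
qed

definition curve_fps :: "complex \<Rightarrow> complex \<Rightarrow> complex \<Rightarrow> complex \<Rightarrow> complex fps" where
  "curve_fps p4 p5 p6 p7 = 1 + fps_const p4 * fps_X ^ 8 + fps_const p5 * fps_X ^ 10
                            + fps_const p6 * fps_X ^ 12 + fps_const p7 * fps_X ^ 14"

lemma fps_X_power_dvd_curve_fps: "fps_X ^ 8 dvd curve_fps p4 p5 p6 p7 - 1"
proof
  show "curve_fps p4 p5 p6 p7 - 1 = fps_X ^ 8 *
     (fps_const p4 + fps_const p5 * fps_X ^ 2 + fps_const p6 * fps_X ^ 4 + fps_const p7 * fps_X ^ 6)"
    by (simp add: curve_fps_def algebra_simps flip: power_add)
qed

lemma sqrt_ser_square: "sqrt_ser p4 p5 p6 p7 ^ 2 = curve_fps p4 p5 p6 p7"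
  and sqrt_ser_nth_0: "sqrt_ser p4 p5 p6 p7 $ 0 = 1"
proof -
  let ?P = "curve_fps p4 p5 p6 p7"
  let ?R = "fps_radical (\<lambda>_ _. 1) 2 ?P"
  have P0: "?P $ 0 = 1" by (simp add: curve_fps_def)
  have "s ^ 2 = ?P \<and> s $ 0 = 1 \<longleftrightarrow> s = ?R" for s :: "complex fps"
    using radical_unique[of "\<lambda>_ _. 1" 1 ?P s] P0 by (auto simp: numeral_2_eq_2)
  then have "sqrt_ser p4 p5 p6 p7 = ?R"
    unfolding sqrt_ser_def curve_fps_def[symmetric] by simp
  moreover have "?R ^ 2 = ?P"
    using power_radical[of ?P "\<lambda>_ _. 1" 1] P0 by (simp add: numeral_2_eq_2)
  ultimately show "sqrt_ser p4 p5 p6 p7 ^ 2 = ?P" "sqrt_ser p4 p5 p6 p7 $ 0 = 1"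
    by simp_all
qed

lemma inverse_sqrt_ser_nth:
  assumes "n < 8"
  shows "inverse (sqrt_ser p4 p5 p6 p7) $ n = (if n = 0 then 1 else 0)"
proof -
  have "fps_X ^ 8 dvd inverse (sqrt_ser p4 p5 p6 p7) - 1"
    by (rule fps_X_power_dvd_inverse_sqrt)
       (simp_all add: sqrt_ser_nth_0 sqrt_ser_square fps_X_power_dvd_curve_fps)
  then have "(inverse (sqrt_ser p4 p5 p6 p7) - 1) $ n = 0"
    using assms by (rule fps_X_power_dvd_nth)
  then show ?thesis by (simp split: if_splits)
qed

lemma inverse_yz: "inverse (yz p4 p5 p6 p7) = fls_X ^ 7 * fps_to_fls (inverse (sqrt_ser p4 p5 p6 p7))"
proof -
  have "subdegree (sqrt_ser p4 p5 p6 p7) = 0" by (simp add: subdegree_eq_0 sqrt_ser_nth_0)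
  then show ?thesis
    by (simp add: yz_def fls_inverse_X_inv_power fls_inverse_fps_to_fls)
qed

definition xz_poly :: "(nat \<Rightarrow> complex) \<Rightarrow> complex fls" where
  "xz_poly c = (\<Sum>k\<le>2. fls_const (c k) * xz ^ k)"

definition quad_residue :: "(nat \<Rightarrow> complex) \<Rightarrow> complex" where
  "quad_residue c = 2 * c 0 * c 2 + c 1 ^ 2"

lemma residue_monomial:
  fixes g :: "complex fls"
  shows "fls_nth (fls_X_inv ^ 4 * (fls_X ^ 7 * g) * (fls_const d * fls_X_inv ^ n)) (-1)
       = d * fls_nth g (int n - 4)"
proof -
  have "fls_X_inv ^ 4 * (fls_X ^ 7 * g) * (fls_const d * fls_X_inv ^ n)
      = fls_const d * (fls_X_inv ^ 4 * (fls_X_inv ^ n * (fls_X ^ 7 * g)))"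
    by (simp only: ac_simps)
  also have "\<dots> = fls_const d * fls_shift (int 4) (fls_shift (int n) (fls_shift (- int 7) g))"
    by (simp only: fls_X_inv_power_times_conv_shift(1) fls_X_power_times_conv_shift(1))
  finally have shift: "fls_X_inv ^ 4 * (fls_X ^ 7 * g) * (fls_const d * fls_X_inv ^ n)
      = fls_const d * fls_shift (int 4) (fls_shift (int n) (fls_shift (- int 7) g))" .
  have "-1 + int 4 + int n + - int 7 = int n - 4" by simp
  then show ?thesis
    unfolding shift fls_mult_const_nth fls_shift_nth by (simp add: algebra_simps)
qed

lemma residue_xz_poly_square:
  "fls_residue (fls_X_inv ^ 4 * inverse (yz p4 p5 p6 p7) * (xz_poly c * xz_poly c)) = quad_residue c"
proof -
  let ?u = "fps_to_fls (inverse (sqrt_ser p4 p5 p6 p7))"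
  have xz_prod: "fls_const (c k) * xz ^ k * (fls_const (c l) * xz ^ l)
      = fls_const (c k * c l) * fls_X_inv ^ (2 * k + 2 * l)" for k l
    by (simp add: xz_def power_mult[symmetric] power_add ac_simps flip: fls_const_mult_const)
  have "fls_X_inv ^ 4 * inverse (yz p4 p5 p6 p7) * (xz_poly c * xz_poly c)
      = (\<Sum>k\<le>2. \<Sum>l\<le>2. fls_X_inv ^ 4 * (fls_X ^ 7 * ?u)
                       * (fls_const (c k * c l) * fls_X_inv ^ (2 * k + 2 * l)))"
    unfolding inverse_yz xz_poly_def sum_product unfolding xz_prod unfolding sum_distrib_left ..
  then have "fls_residue (fls_X_inv ^ 4 * inverse (yz p4 p5 p6 p7) * (xz_poly c * xz_poly c))
      = (\<Sum>k\<le>2. \<Sum>l\<le>2. c k * c l * fls_nth ?u (int (2 * k + 2 * l) - 4))"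
    by (simp add: fls_nth_sum residue_monomial)
  also have "\<dots> = quad_residue c"
    using inverse_sqrt_ser_nth[of 2 p4 p5 p6 p7] inverse_sqrt_ser_nth[of 4 p4 p5 p6 p7]
          inverse_sqrt_ser_nth[of 0 p4 p5 p6 p7]
    by (simp add: quad_residue_def numeral_2_eq_2 power2_eq_square algebra_simps)
  finally show ?thesis .
qed

section \<open>Quadratic interpolation\<close>

definition quad_eval :: "(nat \<Rightarrow> 'a::comm_ring_1) \<Rightarrow> 'a \<Rightarrow> 'a" where
  "quad_eval c x = (\<Sum>k\<le>2. c k * x ^ k)"

lemma quad_eval_expand: "quad_eval c x = c 0 + c 1 * x + c 2 * x ^ 2"
  by (simp add: quad_eval_def numeral_2_eq_2)

lemma quad_eval_add: "quad_eval (\<lambda>k. f k + g k) x = quad_eval f x + quad_eval g x"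
  by (simp add: quad_eval_def sum.distrib distrib_right)

lemma quad_eval_cong: "(\<And>k. k \<le> 2 \<Longrightarrow> c k = d k) \<Longrightarrow> quad_eval c x = quad_eval d x"
  by (simp add: quad_eval_def)

lemma quad_eval_three_roots:
  fixes c :: "nat \<Rightarrow> 'a::field"
  assumes "distinct [u1, u2, u3]" "quad_eval c u1 = 0" "quad_eval c u2 = 0" "quad_eval c u3 = 0"
  shows "c 0 = 0" "c 1 = 0" "c 2 = 0"
proof -
  have slope: "quad_eval c x - quad_eval c y = (x - y) * (c 1 + c 2 * (x + y))" for x y
    by (simp add: quad_eval_expand power2_eq_square algebra_simps)
  have s12: "c 1 + c 2 * (u1 + u2) = 0" and s13: "c 1 + c 2 * (u1 + u3) = 0"
    using slope[of u1 u2] slope[of u1 u3] assms by auto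
  have "c 2 * (u2 - u3) = (c 1 + c 2 * (u1 + u2)) - (c 1 + c 2 * (u1 + u3))"
    by (simp add: algebra_simps)
  also have "\<dots> = 0" using s12 s13 by simp
  finally have "c 2 * (u2 - u3) = 0" .
  with assms(1) show c2: "c 2 = 0" by simp
  with s12 show c1: "c 1 = 0" by simp
  from assms(2) c1 c2 show "c 0 = 0" by (simp add: quad_eval_expand)
qed

definition lagrange3 :: "'a::field \<Rightarrow> 'a \<Rightarrow> 'a \<Rightarrow> 'a \<Rightarrow> 'a \<Rightarrow> 'a \<Rightarrow> nat \<Rightarrow> 'a" where
  "lagrange3 u1 u2 u3 v1 v2 v3 k =
    (let d1 = (u1 - u2) * (u1 - u3); d2 = (u2 - u1) * (u2 - u3); d3 = (u3 - u1) * (u3 - u2) in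
     if k = 0 then v1 * u2 * u3 / d1 + v2 * u1 * u3 / d2 + v3 * u1 * u2 / d3
     else if k = 1 then - (v1 * (u2 + u3) / d1 + v2 * (u1 + u3) / d2 + v3 * (u1 + u2) / d3)
     else if k = 2 then v1 / d1 + v2 / d2 + v3 / d3 else 0)"

lemma lagrange3_zero [simp]: "lagrange3 u1 u2 u3 0 0 0 = (\<lambda>k. 0)"
  by (simp add: lagrange3_def Let_def fun_eq_iff)

lemma quad_eval_lagrange3:
  "quad_eval (lagrange3 u1 u2 u3 v1 v2 v3) x =
     v1 * ((x - u2) * (x - u3)) / ((u1 - u2) * (u1 - u3))
   + v2 * ((x - u1) * (x - u3)) / ((u2 - u1) * (u2 - u3))
   + v3 * ((x - u1) * (x - u2)) / ((u3 - u1) * (u3 - u2))"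
  by (simp add: quad_eval_expand lagrange3_def Let_def add_divide_distrib diff_divide_distrib
      power2_eq_square algebra_simps)

lemma quad_eval_lagrange3_nodes:
  assumes "distinct [u1, u2, u3]"
  shows "quad_eval (lagrange3 u1 u2 u3 v1 v2 v3) u1 = v1"
    "quad_eval (lagrange3 u1 u2 u3 v1 v2 v3) u2 = v2"
    "quad_eval (lagrange3 u1 u2 u3 v1 v2 v3) u3 = v3"
  using assms by (auto simp: quad_eval_lagrange3)

lemma lagrange3_unique:
  assumes "distinct [u1, u2, u3]"
    and "quad_eval c u1 = v1" "quad_eval c u2 = v2" "quad_eval c u3 = v3" "k \<le> 2"
  shows "c k = lagrange3 u1 u2 u3 v1 v2 v3 k"
proof -
  define e where "e k = c k - lagrange3 u1 u2 u3 v1 v2 v3 k" for k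
  have "quad_eval e x = quad_eval c x - quad_eval (lagrange3 u1 u2 u3 v1 v2 v3) x" for x
    by (simp add: e_def quad_eval_expand algebra_simps)
  then have "e 0 = 0" "e 1 = 0" "e 2 = 0"
    using quad_eval_three_roots[of u1 u2 u3 e] assms quad_eval_lagrange3_nodes[OF assms(1)]
    by simp_all
  with \<open>k \<le> 2\<close> show ?thesis
    by (auto simp: e_def le_Suc_eq numeral_2_eq_2)
qed

lemma Gfun_swap12: "Gfun u1 u2 u3 k1 k2 k3 = Gfun u2 u1 u3 k2 k1 k3"
proof -
  have D: "((u2 - u1) * (u2 - u3) * (u1 - u3)) ^ 2 = ((u1 - u2) * (u1 - u3) * (u2 - u3)) ^ 2"
    by (simp add: power2_eq_square algebra_simps)
  have B: "(u3\<^sup>2 * (k1 - k2) + u1\<^sup>2 * (k2 - k3) + u2\<^sup>2 * (k3 - k1)) ^ 2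
      = (u3\<^sup>2 * (k2 - k1) + u2\<^sup>2 * (k1 - k3) + u1\<^sup>2 * (k3 - k2)) ^ 2"
    by (simp add: power2_eq_square algebra_simps)
  have AC: "2 * (u3 * (k1 - k2) + u1 * (k2 - k3) + u2 * (k3 - k1))
        * (u3\<^sup>2 * (u2 * k1 - u1 * k2) + u1\<^sup>2 * (u3 * k2 - u2 * k3) + u2\<^sup>2 * (u1 * k3 - u3 * k1))
      = 2 * (u3 * (k2 - k1) + u2 * (k1 - k3) + u1 * (k3 - k2))
        * (u3\<^sup>2 * (u1 * k2 - u2 * k1) + u2\<^sup>2 * (u3 * k1 - u1 * k3) + u1\<^sup>2 * (u2 * k3 - u3 * k2))"
    by (simp add: algebra_simps)
  show ?thesis
    unfolding Gfun_def Let_def D B AC ..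
qed

lemma quad_residue_lagrange3:
  assumes "distinct [u1, u2, u3]"
  shows "quad_residue (lagrange3 u1 u2 u3 k1 k2 k3) = Gfun u1 u2 u3 k1 k2 k3"
proof -
  define D where "D = (u1 - u2) * (u1 - u3) * (u2 - u3)"
  define A where "A = u3 * (k2 - k1) + u2 * (k1 - k3) + u1 * (k3 - k2)"
  define B where "B = u3^2 * (k2 - k1) + u2^2 * (k1 - k3) + u1^2 * (k3 - k2)"
  define C where "C = u3^2 * (u1 * k2 - u2 * k1) + u2^2 * (u3 * k1 - u1 * k3) + u1^2 * (u2 * k3 - u3 * k2)"
  have D: "D \<noteq> 0" using assms by (simp add: D_def)
  have common_denominator: "x / ((u1 - u2) * (u1 - u3)) = x * (u2 - u3) / D"
      "x / ((u2 - u1) * (u2 - u3)) = - x * (u1 - u3) / D"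
      "x / ((u3 - u1) * (u3 - u2)) = x * (u1 - u2) / D" for x
  proof -
    have nz: "(u1 - u2) * (u1 - u3) \<noteq> 0" "(u2 - u1) * (u2 - u3) \<noteq> 0" "(u3 - u1) * (u3 - u2) \<noteq> 0"
      using assms by auto
    show "x / ((u1 - u2) * (u1 - u3)) = x * (u2 - u3) / D"
      "x / ((u2 - u1) * (u2 - u3)) = - x * (u1 - u3) / D"
      "x / ((u3 - u1) * (u3 - u2)) = x * (u1 - u2) / D"
      by (simp_all only: frac_eq_eq nz D not_False_eq_True) (simp_all add: D_def algebra_simps)
  qed
  have c2: "lagrange3 u1 u2 u3 k1 k2 k3 2 = A / D"
    unfolding lagrange3_def Let_def common_denominator using D by (simp add: A_def field_simps)
  have c1: "lagrange3 u1 u2 u3 k1 k2 k3 1 = - B / D"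
    unfolding lagrange3_def Let_def common_denominator using D
    by (simp add: B_def field_simps) (simp add: algebra_simps power2_eq_square)
  have c0: "lagrange3 u1 u2 u3 k1 k2 k3 0 = C / D"
    unfolding lagrange3_def Let_def common_denominator using D
    by (simp add: C_def field_simps) (simp add: algebra_simps power2_eq_square)
  have G: "Gfun u1 u2 u3 k1 k2 k3 = B^2 / D^2 + 2 * A * C / D^2"
    by (simp add: Gfun_def Let_def A_def B_def C_def D_def)
  show ?thesis
    unfolding quad_residue_def c0 c1 c2 G using D by (simp add: field_simps power2_eq_square)
qed

section \<open>Solving for A_0, A_1, A_2\<close>

definition sing_entry ::
  "(nat \<Rightarrow> complex) \<Rightarrow> (nat \<Rightarrow> complex) \<Rightarrow> (nat \<Rightarrow> nat \<Rightarrow> complex) \<Rightarrow> (nat \<Rightarrow> nat \<Rightarrow> complex)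
   \<Rightarrow> nat \<Rightarrow> nat \<Rightarrow> nat \<Rightarrow> complex" where
  "sing_entry a b \<alpha> \<beta> i j s = (\<Sum>r\<in>{1..6} - {s}. \<alpha> i r * \<beta> j r * (b s + b r) / (a s - a r))"

definition lax_rhs ::
  "(nat \<Rightarrow> complex) \<Rightarrow> (nat \<Rightarrow> complex) \<Rightarrow> (nat \<Rightarrow> complex) \<Rightarrow> (nat \<Rightarrow> nat \<Rightarrow> complex)
   \<Rightarrow> (nat \<Rightarrow> nat \<Rightarrow> complex) \<Rightarrow> nat \<Rightarrow> nat \<Rightarrow> complex" where
  "lax_rhs a b \<kappa> \<alpha> \<beta> i s = \<kappa> s * \<alpha> i s - (\<Sum>j\<in>{1,2}. sing_entry a b \<alpha> \<beta> i j s * \<alpha> j s)"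

lemma lax_eqs_iff:
  "lax_eqs a b \<kappa> \<alpha> \<beta> Am \<longleftrightarrow>
     (\<forall>k i j. (k > 2 \<or> i \<notin> {1,2} \<or> j \<notin> {1,2}) \<longrightarrow> Am k i j = 0) \<and>
     (\<forall>s\<in>{1..6}. \<forall>i\<in>{1,2::nat}.
        (\<Sum>j\<in>{1,2}. quad_eval (\<lambda>k. Am k i j) (a s) * \<alpha> j s) = lax_rhs a b \<kappa> \<alpha> \<beta> i s)"
proof -
  have "(\<Sum>j\<in>{1,2::nat}. ((\<Sum>k\<le>2. Am k i j * a s ^ k) + sing_entry a b \<alpha> \<beta> i j s) * \<alpha> j s)
      = (\<Sum>j\<in>{1,2}. quad_eval (\<lambda>k. Am k i j) (a s) * \<alpha> j s)
        + (\<Sum>j\<in>{1,2}. sing_entry a b \<alpha> \<beta> i j s * \<alpha> j s)" for i s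
    by (simp add: quad_eval_def distrib_right)
  then show ?thesis
    unfolding lax_eqs_def lax_rhs_def sing_entry_def[symmetric] by (simp add: eq_diff_eq)
qed

definition pure_coeffs ::
  "(nat \<Rightarrow> complex) \<Rightarrow> (nat \<Rightarrow> complex) \<Rightarrow> (nat \<Rightarrow> complex) \<Rightarrow> nat \<Rightarrow> nat \<Rightarrow> nat \<Rightarrow> nat \<Rightarrow> complex" where
  "pure_coeffs t x R p q r = lagrange3 (t p) (t q) (t r) (R p / x p) (R q / x q) (R r / x r)"

definition mixed_coeffs ::
  "(nat \<Rightarrow> complex) \<Rightarrow> (nat \<Rightarrow> complex) \<Rightarrow> (nat \<Rightarrow> complex) \<Rightarrow> (nat \<Rightarrow> complex)
   \<Rightarrow> nat \<Rightarrow> nat \<Rightarrow> nat \<Rightarrow> nat \<Rightarrow> nat \<Rightarrow> nat \<Rightarrow> nat \<Rightarrow> complex" where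
  "mixed_coeffs t x y R p q r m u v = lagrange3 (t m) (t u) (t v)
     ((R m - quad_eval (pure_coeffs t x R p q r) (t m) * x m) / y m) (R u / y u) (R v / y v)"

text \<open>The system is triangular: at p, q, r only f enters, so f is interpolated there first;
  then g is interpolated at m, u, v, where only m sees f.\<close>
lemma quad_pair_system_iff:
  fixes t x y R f g :: "nat \<Rightarrow> complex"
  assumes dist: "distinct [t p, t q, t r]" "distinct [t m, t u, t v]"
    and y0: "y p = 0" "y q = 0" "y r = 0" and xn: "x p \<noteq> 0" "x q \<noteq> 0" "x r \<noteq> 0"
    and x0: "x u = 0" "x v = 0" and yn: "y m \<noteq> 0" "y u \<noteq> 0" "y v \<noteq> 0"
  shows "(\<forall>s\<in>{p,q,r,m,u,v}. quad_eval f (t s) * x s + quad_eval g (t s) * y s = R s) \<longleftrightarrow>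
         (\<forall>k\<le>2. f k = pure_coeffs t x R p q r k) \<and> (\<forall>k\<le>2. g k = mixed_coeffs t x y R p q r m u v k)"
proof
  assume eqs: "\<forall>s\<in>{p,q,r,m,u,v}. quad_eval f (t s) * x s + quad_eval g (t s) * y s = R s"
  then have "quad_eval f (t p) = R p / x p" "quad_eval f (t q) = R q / x q"
      "quad_eval f (t r) = R r / x r"
    using y0 xn by (auto simp: field_simps)
  then have f: "\<forall>k\<le>2. f k = pure_coeffs t x R p q r k"
    unfolding pure_coeffs_def using dist(1) by (auto intro: lagrange3_unique)
  then have "quad_eval f (t m) = quad_eval (pure_coeffs t x R p q r) (t m)"
    by (auto intro: quad_eval_cong)
  then have "quad_eval g (t m) = (R m - quad_eval (pure_coeffs t x R p q r) (t m) * x m) / y m"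
      "quad_eval g (t u) = R u / y u" "quad_eval g (t v) = R v / y v"
    using eqs x0 yn by (auto simp: field_simps)
  then have "\<forall>k\<le>2. g k = mixed_coeffs t x y R p q r m u v k"
    unfolding mixed_coeffs_def using dist(2) by (auto intro: lagrange3_unique)
  with f show "(\<forall>k\<le>2. f k = pure_coeffs t x R p q r k) \<and> (\<forall>k\<le>2. g k = mixed_coeffs t x y R p q r m u v k)"
    by simp
next
  assume "(\<forall>k\<le>2. f k = pure_coeffs t x R p q r k) \<and> (\<forall>k\<le>2. g k = mixed_coeffs t x y R p q r m u v k)"
  then have "quad_eval f z = quad_eval (pure_coeffs t x R p q r) z"
      "quad_eval g z = quad_eval (mixed_coeffs t x y R p q r m u v) z" for z
    by (auto intro: quad_eval_cong)
  then show "\<forall>s\<in>{p,q,r,m,u,v}. quad_eval f (t s) * x s + quad_eval g (t s) * y s = R s"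
    using quad_eval_lagrange3_nodes[OF dist(1)] quad_eval_lagrange3_nodes[OF dist(2)] xn yn x0 y0
    by (auto simp: pure_coeffs_def mixed_coeffs_def)
qed

definition lax_solution where
  "lax_solution a b \<kappa> \<alpha> \<beta> c d p q r m u v k i j =
     (if k \<le> 2 \<and> i \<in> {1,2} then
        (if j = c then pure_coeffs a (\<alpha> c) (lax_rhs a b \<kappa> \<alpha> \<beta> i) p q r k
         else if j = d then mixed_coeffs a (\<alpha> c) (\<alpha> d) (lax_rhs a b \<kappa> \<alpha> \<beta> i) p q r m u v k
         else 0)
      else 0)"

lemma lax_A_eq_lax_solution:
  assumes cd: "{c, d} = {1, 2::nat}" and S: "{p, q, r, m, u, v} = {1..6::nat}"
    and dist: "distinct [a p, a q, a r]" "distinct [a m, a u, a v]"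
    and config: "\<alpha> d p = 0" "\<alpha> d q = 0" "\<alpha> d r = 0" "\<alpha> c p \<noteq> 0" "\<alpha> c q \<noteq> 0" "\<alpha> c r \<noteq> 0"
      "\<alpha> c u = 0" "\<alpha> c v = 0" "\<alpha> d m \<noteq> 0" "\<alpha> d u \<noteq> 0" "\<alpha> d v \<noteq> 0"
  shows "lax_A a b \<kappa> \<alpha> \<beta> = lax_solution a b \<kappa> \<alpha> \<beta> c d p q r m u v"
proof -
  have "c \<noteq> d" using cd by auto
  let ?pure = "\<lambda>i. pure_coeffs a (\<alpha> c) (lax_rhs a b \<kappa> \<alpha> \<beta> i) p q r"
  let ?mixed = "\<lambda>i. mixed_coeffs a (\<alpha> c) (\<alpha> d) (lax_rhs a b \<kappa> \<alpha> \<beta> i) p q r m u v"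
  have row: "(\<Sum>j\<in>{1,2}. quad_eval (\<lambda>k. Am k i j) (a s) * \<alpha> j s)
      = quad_eval (\<lambda>k. Am k i c) (a s) * \<alpha> c s + quad_eval (\<lambda>k. Am k i d) (a s) * \<alpha> d s" for Am i s
    unfolding cd[symmetric] using \<open>c \<noteq> d\<close> by simp
  have iff: "lax_eqs a b \<kappa> \<alpha> \<beta> Am \<longleftrightarrow>
      (\<forall>k i j. (k > 2 \<or> i \<notin> {1,2} \<or> j \<notin> {1,2}) \<longrightarrow> Am k i j = 0) \<and>
      (\<forall>i\<in>{1,2::nat}. (\<forall>k\<le>2. Am k i c = ?pure i k) \<and> (\<forall>k\<le>2. Am k i d = ?mixed i k))" for Am
  proof -
    have "(\<forall>s\<in>{p,q,r,m,u,v}. quad_eval (\<lambda>k. Am k i c) (a s) * \<alpha> c s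
             + quad_eval (\<lambda>k. Am k i d) (a s) * \<alpha> d s = lax_rhs a b \<kappa> \<alpha> \<beta> i s)
        \<longleftrightarrow> (\<forall>k\<le>2. Am k i c = ?pure i k) \<and> (\<forall>k\<le>2. Am k i d = ?mixed i k)" for i
      by (rule quad_pair_system_iff[OF dist config])
    then show ?thesis
      unfolding lax_eqs_iff row S[symmetric] by blast
  qed
  let ?A = "lax_solution a b \<kappa> \<alpha> \<beta> c d p q r m u v"
  have solution: "lax_eqs a b \<kappa> \<alpha> \<beta> ?A"
    unfolding iff using cd \<open>c \<noteq> d\<close> by (auto simp: lax_solution_def)
  have unique: "Am = ?A" if "lax_eqs a b \<kappa> \<alpha> \<beta> Am" for Am
  proof (intro ext)
    fix k i j
    show "Am k i j = ?A k i j"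
      using that cd unfolding iff
      by (cases "k > 2 \<or> i \<notin> {1,2} \<or> j \<notin> {1,2}") (auto simp: lax_solution_def)
  qed
  show ?thesis
    unfolding lax_A_def by (rule the_equality[of "lax_eqs a b \<kappa> \<alpha> \<beta>", OF solution unique])
qed

lemma xz_poly_cong: "(\<And>k. k \<le> 2 \<Longrightarrow> f k = g k) \<Longrightarrow> xz_poly f = xz_poly g"
  by (simp add: xz_poly_def)

lemma xz_poly_zero [simp]: "xz_poly (\<lambda>k. 0) = 0"
  by (simp add: xz_poly_def)

lemma Lz_eq_xz_poly:
  assumes "\<forall>s\<in>{1..6}. \<alpha> i s * \<beta> j s = 0"
  shows "Lz p4 p5 p6 p7 a b \<kappa> \<alpha> \<beta> i j = xz_poly (\<lambda>k. lax_A a b \<kappa> \<alpha> \<beta> k i j)"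
proof -
  have "(\<Sum>s\<in>{1..6}. fls_const (\<alpha> i s * \<beta> j s) * (yz p4 p5 p6 p7 + fls_const (b s))
            * inverse (xz - fls_const (a s))) = 0"
    using assms by (intro sum.neutral) auto
  then show ?thesis by (simp add: Lz_def xz_poly_def)
qed

lemma Ham_triangular:
  assumes cd: "{c, d} = {1, 2::nat}"
    and "Lz p4 p5 p6 p7 a b \<kappa> \<alpha> \<beta> d c = 0"
    and "Lz p4 p5 p6 p7 a b \<kappa> \<alpha> \<beta> c c = xz_poly f" "Lz p4 p5 p6 p7 a b \<kappa> \<alpha> \<beta> d d = xz_poly g"
  shows "Ham p4 p5 p6 p7 a b \<kappa> \<alpha> \<beta> = quad_residue f + quad_residue g"
proof -
  have "c \<noteq> d" using cd by auto
  then have trace: "(\<Sum>i\<in>{1,2::nat}. \<Sum>j\<in>{1,2::nat}.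
      Lz p4 p5 p6 p7 a b \<kappa> \<alpha> \<beta> i j * Lz p4 p5 p6 p7 a b \<kappa> \<alpha> \<beta> j i)
      = xz_poly f * xz_poly f + xz_poly g * xz_poly g"
    unfolding cd[symmetric] using assms(2-4) by simp
  show ?thesis
    unfolding Ham_def trace distrib_left fls_residue_add residue_xz_poly_square ..
qed

text \<open>With the singular part of L confined to the entry (c, d), L is triangular and its diagonal
  entries are the quadratics interpolating \<kappa> at p, q, r and at m, u, v.\<close>
lemma Ham_eq_Gfun_sum:
  assumes cd: "{c, d} = {1, 2::nat}" and S: "{p, q, r, m, u, v} = {1..6::nat}"
    and dist: "distinct [a p, a q, a r]" "distinct [a m, a u, a v]"
    and config: "\<alpha> d p = 0" "\<alpha> d q = 0" "\<alpha> d r = 0" "\<alpha> c p \<noteq> 0" "\<alpha> c q \<noteq> 0" "\<alpha> c r \<noteq> 0"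
      "\<alpha> c u = 0" "\<alpha> c v = 0" "\<alpha> d m \<noteq> 0" "\<alpha> d u \<noteq> 0" "\<alpha> d v \<noteq> 0"
    and sing: "\<forall>s\<in>{1..6}. \<alpha> c s * \<beta> c s = 0 \<and> \<alpha> d s * \<beta> d s = 0 \<and> \<alpha> d s * \<beta> c s = 0"
  shows "Ham p4 p5 p6 p7 a b \<kappa> \<alpha> \<beta>
       = Gfun (a p) (a q) (a r) (\<kappa> p) (\<kappa> q) (\<kappa> r) + Gfun (a m) (a u) (a v) (\<kappa> m) (\<kappa> u) (\<kappa> v)"
proof -
  have "c \<noteq> d" using cd by auto
  have sing_zero: "sing_entry a b \<alpha> \<beta> i j s = 0"
    if "(i, j) \<in> {(c, c), (d, d), (d, c)}" for i j s
    unfolding sing_entry_def using sing that by (intro sum.neutral) auto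
  have rhs_d: "lax_rhs a b \<kappa> \<alpha> \<beta> d s = \<kappa> s * \<alpha> d s" for s
    unfolding lax_rhs_def cd[symmetric] using sing_zero \<open>c \<noteq> d\<close> by simp
  have rhs_c: "lax_rhs a b \<kappa> \<alpha> \<beta> c s = \<kappa> s * \<alpha> c s" if "\<alpha> d s = 0" for s
    unfolding lax_rhs_def cd[symmetric] using sing_zero \<open>c \<noteq> d\<close> that by simp
  have pure_c: "pure_coeffs a (\<alpha> c) (lax_rhs a b \<kappa> \<alpha> \<beta> c) p q r
      = lagrange3 (a p) (a q) (a r) (\<kappa> p) (\<kappa> q) (\<kappa> r)"
    using config by (simp add: pure_coeffs_def rhs_c)
  have pure_d: "pure_coeffs a (\<alpha> c) (lax_rhs a b \<kappa> \<alpha> \<beta> d) p q r = (\<lambda>k. 0)"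
    using config by (simp add: pure_coeffs_def rhs_d)
  have mixed_d: "mixed_coeffs a (\<alpha> c) (\<alpha> d) (lax_rhs a b \<kappa> \<alpha> \<beta> d) p q r m u v
      = lagrange3 (a m) (a u) (a v) (\<kappa> m) (\<kappa> u) (\<kappa> v)"
    using config by (simp add: mixed_coeffs_def pure_d rhs_d quad_eval_def)
  note A = lax_A_eq_lax_solution[OF cd S dist config]
  have "c \<in> {1, 2}" "d \<in> {1, 2}" using cd by auto
  then have "Lz p4 p5 p6 p7 a b \<kappa> \<alpha> \<beta> d c = 0"
      "Lz p4 p5 p6 p7 a b \<kappa> \<alpha> \<beta> c c = xz_poly (lagrange3 (a p) (a q) (a r) (\<kappa> p) (\<kappa> q) (\<kappa> r))"
      "Lz p4 p5 p6 p7 a b \<kappa> \<alpha> \<beta> d d = xz_poly (lagrange3 (a m) (a u) (a v) (\<kappa> m) (\<kappa> u) (\<kappa> v))"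
    using sing \<open>c \<noteq> d\<close>
    by (simp_all add: Lz_eq_xz_poly A lax_solution_def pure_c pure_d mixed_d cong: xz_poly_cong)
  then show ?thesis
    using Ham_triangular[OF cd] quad_residue_lagrange3 dist by simp
qed

section \<open>The subvariety Z\<close>

lemma atLeastAtMost_1_6: "{1..6::nat} = {1, 2, 3, 4, 5, 6}"
  by auto

lemma atLeastAtMost_1_4: "{1..4::nat} = {1, 2, 3, 4}"
  by auto

text \<open>If one component of the \<alpha>'s vanished at four of the six points, adding
  (x - a u)(x - a v) to the corresponding column of the polynomial part would give a second
  solution of the equations determining A_0, A_1, A_2.\<close>
lemma lax_defined_alpha_nonvanishing:
  assumes defined: "lax_defined a b \<kappa> \<alpha> \<beta>" and j: "j \<in> {1, 2}"
  shows "\<exists>s\<in>{1..6} - {u, v}. \<alpha> j s \<noteq> 0"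
proof (rule ccontr)
  assume "\<not> ?thesis"
  then have vanish: "(a s - a u) * (a s - a v) * \<alpha> j s = 0" if "s \<in> {1..6}" for s
    using that by auto
  obtain Am where Am: "lax_eqs a b \<kappa> \<alpha> \<beta> Am"
    and unique: "\<And>Bm. lax_eqs a b \<kappa> \<alpha> \<beta> Bm \<Longrightarrow> Bm = Am"
    using defined unfolding lax_defined_def by blast
  define e where "e k = (if k = 0 then a u * a v else if k = 1 then - (a u + a v) else if k = 2 then 1 else 0)"
    for k :: nat
  have e_eval: "quad_eval e x = (x - a u) * (x - a v)" for x
    by (simp add: e_def quad_eval_expand power2_eq_square algebra_simps)
  define Am' where "Am' k i l = Am k i l + (if i = 1 \<and> l = j then e k else 0)" for k i l
  have row: "(\<Sum>l\<in>{1,2}. quad_eval (\<lambda>k. Am' k i l) (a s) * \<alpha> l s)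
      = (\<Sum>l\<in>{1,2}. quad_eval (\<lambda>k. Am k i l) (a s) * \<alpha> l s)
        + (if i = 1 then quad_eval e (a s) * \<alpha> j s else 0)" for i s
    using j by (auto simp: Am'_def quad_eval_add quad_eval_def distrib_right)
  have "lax_eqs a b \<kappa> \<alpha> \<beta> Am'"
    using Am j vanish unfolding lax_eqs_iff row e_eval by (auto simp: Am'_def e_def)
  then have "Am' 2 1 j = Am 2 1 j" using unique by simp
  then show False by (simp add: Am'_def e_def)
qed

lemma Ham_upper_triangular_near_Z:
  assumes inj: "inj_on a {1..6}"
    and "\<alpha> 2 2 = 0" "\<alpha> 2 4 = 0" "\<alpha> 2 5 = 0" "\<alpha> 1 2 \<noteq> 0" "\<alpha> 1 4 \<noteq> 0" "\<alpha> 1 5 \<noteq> 0"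
      "\<alpha> 2 1 \<noteq> 0" "\<alpha> 2 3 \<noteq> 0" "\<alpha> 2 6 \<noteq> 0" "\<alpha> 1 6 = 0"
    and mixed: "\<alpha> 1 1 = 0 \<or> \<alpha> 1 3 = 0"
    and "\<forall>s\<in>{1..6}. \<alpha> 1 s * \<beta> 1 s = 0 \<and> \<alpha> 2 s * \<beta> 2 s = 0 \<and> \<alpha> 2 s * \<beta> 1 s = 0"
  shows "Ham p4 p5 p6 p7 a b \<kappa> \<alpha> \<beta>
       = Gfun (a 1) (a 3) (a 6) (\<kappa> 1) (\<kappa> 3) (\<kappa> 6) + Gfun (a 2) (a 4) (a 5) (\<kappa> 2) (\<kappa> 4) (\<kappa> 5)"
proof -
  have "distinct [a 2, a 4, a 5]" "distinct [a 1, a 3, a 6]" "distinct [a 3, a 1, a 6]"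
    by (simp_all add: inj_on_eq_iff[OF inj])
  note Ham_config = Ham_eq_Gfun_sum[where c = 1 and d = 2 and p = 2 and q = 4 and r = 5 and v = 6,
      OF _ _ this(1)]
  from mixed show ?thesis
  proof
    assume "\<alpha> 1 1 = 0"
    then have "Ham p4 p5 p6 p7 a b \<kappa> \<alpha> \<beta>
        = Gfun (a 2) (a 4) (a 5) (\<kappa> 2) (\<kappa> 4) (\<kappa> 5) + Gfun (a 3) (a 1) (a 6) (\<kappa> 3) (\<kappa> 1) (\<kappa> 6)"
      using assms \<open>distinct [a 3, a 1, a 6]\<close> by (intro Ham_config) auto
    then show ?thesis by (simp add: Gfun_swap12[of "a 3"] add.commute)
  next
    assume "\<alpha> 1 3 = 0"
    then have "Ham p4 p5 p6 p7 a b \<kappa> \<alpha> \<beta>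
        = Gfun (a 2) (a 4) (a 5) (\<kappa> 2) (\<kappa> 4) (\<kappa> 5) + Gfun (a 1) (a 3) (a 6) (\<kappa> 1) (\<kappa> 3) (\<kappa> 6)"
      using assms \<open>distinct [a 1, a 3, a 6]\<close> by (intro Ham_config) auto
    then show ?thesis by (simp add: add.commute)
  qed
qed

lemma Ham_lower_triangular_near_Z:
  assumes inj: "inj_on a {1..6}"
    and "\<alpha> 1 1 = 0" "\<alpha> 1 3 = 0" "\<alpha> 1 6 = 0" "\<alpha> 2 1 \<noteq> 0" "\<alpha> 2 3 \<noteq> 0" "\<alpha> 2 6 \<noteq> 0"
      "\<alpha> 1 2 \<noteq> 0" "\<alpha> 1 4 \<noteq> 0" "\<alpha> 1 5 \<noteq> 0" "\<alpha> 2 5 = 0"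
    and mixed: "\<alpha> 2 2 = 0 \<or> \<alpha> 2 4 = 0"
    and "\<forall>s\<in>{1..6}. \<alpha> 2 s * \<beta> 2 s = 0 \<and> \<alpha> 1 s * \<beta> 1 s = 0 \<and> \<alpha> 1 s * \<beta> 2 s = 0"
  shows "Ham p4 p5 p6 p7 a b \<kappa> \<alpha> \<beta>
       = Gfun (a 1) (a 3) (a 6) (\<kappa> 1) (\<kappa> 3) (\<kappa> 6) + Gfun (a 2) (a 4) (a 5) (\<kappa> 2) (\<kappa> 4) (\<kappa> 5)"
proof -
  have "distinct [a 1, a 3, a 6]" "distinct [a 2, a 4, a 5]" "distinct [a 4, a 2, a 5]"
    by (simp_all add: inj_on_eq_iff[OF inj])
  note Ham_config = Ham_eq_Gfun_sum[where c = 2 and d = 1 and p = 1 and q = 3 and r = 6 and v = 5,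
      OF _ _ this(1)]
  from mixed show ?thesis
  proof
    assume "\<alpha> 2 2 = 0"
    then have "Ham p4 p5 p6 p7 a b \<kappa> \<alpha> \<beta>
        = Gfun (a 1) (a 3) (a 6) (\<kappa> 1) (\<kappa> 3) (\<kappa> 6) + Gfun (a 4) (a 2) (a 5) (\<kappa> 4) (\<kappa> 2) (\<kappa> 5)"
      using assms \<open>distinct [a 4, a 2, a 5]\<close> by (intro Ham_config) auto
    then show ?thesis by (simp add: Gfun_swap12[of "a 4"])
  next
    assume "\<alpha> 2 4 = 0"
    then show ?thesis
      using assms \<open>distinct [a 2, a 4, a 5]\<close> by (intro Ham_config) auto
  qed
qed

lemma has_field_derivative_zero_if_locally_constant:
  assumes "open S" "x \<in> S" "\<And>t. t \<in> S \<Longrightarrow> f t = f x"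
  shows "(f has_field_derivative 0) (at x)"
  using has_field_derivative_transform_within_open[OF DERIV_const assms(1,2)] assms(3) by simp

locale Z_point =
  fixes a \<kappa> :: "nat \<Rightarrow> complex" and \<alpha> \<beta> :: "nat \<Rightarrow> nat \<Rightarrow> complex"
  assumes distinct_nodes: "inj_on a {1..6}"
    and gauge: "\<alpha> 1 5 = 1" "\<alpha> 2 5 = 0" "\<alpha> 1 6 = 0" "\<alpha> 2 6 = 1"
    and Z_alpha: "\<alpha> 1 1 = 0" "\<alpha> 2 2 = 0" "\<alpha> 1 3 = 0" "\<alpha> 2 4 = 0"
    and Z_beta: "\<forall>i\<in>{1,2}. \<forall>s\<in>{1..6}. \<beta> i s = 0"
    and alpha_nonzero: "\<alpha> 2 1 \<noteq> 0" "\<alpha> 1 2 \<noteq> 0" "\<alpha> 2 3 \<noteq> 0" "\<alpha> 1 4 \<noteq> 0"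
begin

lemma Ham_Z: "Ham p4 p5 p6 p7 a b \<kappa> \<alpha> \<beta>
    = Gfun (a 1) (a 3) (a 6) (\<kappa> 1) (\<kappa> 3) (\<kappa> 6) + Gfun (a 2) (a 4) (a 5) (\<kappa> 2) (\<kappa> 4) (\<kappa> 5)"
  using distinct_nodes gauge Z_alpha Z_beta alpha_nonzero by (intro Ham_upper_triangular_near_Z) auto

text \<open>Entries of \<alpha> that are nonzero on Z must stay nonzero, otherwise A_0, A_1, A_2 are
  no longer determined.\<close>
lemma Ham_alpha_update:
  assumes i: "i \<in> {1, 2}" and j: "j \<in> {1..4}" and t: "t \<noteq> 0 \<or> \<alpha> i j = 0"
  shows "Ham p4 p5 p6 p7 a b \<kappa> (\<alpha>(i := (\<alpha> i)(j := t))) \<beta> = Ham p4 p5 p6 p7 a b \<kappa> \<alpha> \<beta>"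
proof (cases "i = 2 \<and> (j = 2 \<or> j = 4)")
  case True
  then show ?thesis
    unfolding Ham_Z using distinct_nodes gauge Z_alpha Z_beta alpha_nonzero
    by (intro Ham_lower_triangular_near_Z) auto
next
  case False
  then show ?thesis
    unfolding Ham_Z using i j t distinct_nodes gauge Z_alpha Z_beta alpha_nonzero
    by (intro Ham_upper_triangular_near_Z) (auto simp: atLeastAtMost_1_6)
qed

lemma Ham_beta_update:
  assumes "(i, j) \<in> {(1, 1), (2, 2), (1, 3), (2, 4)}"
  shows "Ham p4 p5 p6 p7 a b \<kappa> \<alpha> (\<beta>(i := (\<beta> i)(j := t))) = Ham p4 p5 p6 p7 a b \<kappa> \<alpha> \<beta>"
proof (cases "i = 1")
  case True
  then show ?thesis
    unfolding Ham_Z using assms distinct_nodes gauge Z_alpha Z_beta alpha_nonzero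
    by (intro Ham_lower_triangular_near_Z) auto
next
  case False
  then show ?thesis
    unfolding Ham_Z using assms distinct_nodes gauge Z_alpha Z_beta alpha_nonzero
    by (intro Ham_upper_triangular_near_Z) auto
qed

lemma Ham_alpha_derivative:
  assumes "i \<in> {1, 2}" "j \<in> {1..4}"
  shows "((\<lambda>t. Ham p4 p5 p6 p7 a b \<kappa> (\<alpha>(i := (\<alpha> i)(j := t))) \<beta>) has_field_derivative 0) (at (\<alpha> i j))"
proof (rule has_field_derivative_zero_if_locally_constant)
  have "{t::complex. t \<noteq> 0 \<or> \<alpha> i j = 0} = (if \<alpha> i j = 0 then UNIV else - {0})"
    by auto
  moreover have "open (- {0::complex})"
    by (intro open_Compl closed_singleton)
  ultimately show "open {t::complex. t \<noteq> 0 \<or> \<alpha> i j = 0}"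
    by simp
  show "\<alpha> i j \<in> {t::complex. t \<noteq> 0 \<or> \<alpha> i j = 0}"
    by simp
  show "Ham p4 p5 p6 p7 a b \<kappa> (\<alpha>(i := (\<alpha> i)(j := t))) \<beta>
      = Ham p4 p5 p6 p7 a b \<kappa> (\<alpha>(i := (\<alpha> i)(j := \<alpha> i j))) \<beta>"
    if "t \<in> {t::complex. t \<noteq> 0 \<or> \<alpha> i j = 0}" for t
    using Ham_alpha_update[OF assms] that by simp
qed

lemma Ham_beta_derivative:
  assumes "(i, j) \<in> {(1, 1), (2, 2), (1, 3), (2, 4)}"
  shows "((\<lambda>t. Ham p4 p5 p6 p7 a b \<kappa> \<alpha> (\<beta>(i := (\<beta> i)(j := t)))) has_field_derivative 0) (at (\<beta> i j))"
proof (rule has_field_derivative_zero_if_locally_constant[OF open_UNIV UNIV_I])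
  show "Ham p4 p5 p6 p7 a b \<kappa> \<alpha> (\<beta>(i := (\<beta> i)(j := t)))
      = Ham p4 p5 p6 p7 a b \<kappa> \<alpha> (\<beta>(i := (\<beta> i)(j := \<beta> i j)))" for t
    using Ham_beta_update[OF assms] by simp
qed

end

theorem mainTheorem8:
  fixes p4 p5 p6 p7 :: complex
    and a b \<kappa> :: "nat \<Rightarrow> complex"
    and \<alpha> \<beta> :: "nat \<Rightarrow> nat \<Rightarrow> complex"
  assumes distinct: "\<forall>s\<in>{1..6}. \<forall>r\<in>{1..6}. s \<noteq> r \<longrightarrow> a s \<noteq> a r"
    and on_curve: "\<forall>s\<in>{1..6}. (b s)^2 = curveP p4 p5 p6 p7 (a s)"
    and gauge: "\<alpha> 1 5 = 1" "\<alpha> 2 5 = 0" "\<alpha> 1 6 = 0" "\<alpha> 2 6 = 1"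
               "\<beta> 1 5 = 0" "\<beta> 2 6 = 0"
    and Z_alpha: "\<alpha> 1 1 = 0" "\<alpha> 2 2 = 0" "\<alpha> 1 3 = 0" "\<alpha> 2 4 = 0"
    and Z_beta: "\<forall>i\<in>{1,2}. \<forall>j\<in>{1..4}. \<beta> i j = 0" "\<beta> 2 5 = 0" "\<beta> 1 6 = 0"
    and defined: "lax_defined a b \<kappa> \<alpha> \<beta>"
  shows "(\<forall>i\<in>{1,2}. \<forall>j\<in>{1..4}.
            ((\<lambda>t. Ham p4 p5 p6 p7 a b \<kappa> (\<alpha>(i := (\<alpha> i)(j := t))) \<beta>)
               has_field_derivative 0) (at (\<alpha> i j)))
       \<and> (\<forall>(i,j)\<in>{(1,1),(2,2),(1,3),(2,4)}.
            ((\<lambda>t. Ham p4 p5 p6 p7 a b \<kappa> \<alpha> (\<beta>(i := (\<beta> i)(j := t))))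
               has_field_derivative 0) (at (\<beta> i j)))
       \<and> Ham p4 p5 p6 p7 a b \<kappa> \<alpha> \<beta>
           = Gfun (a 1) (a 3) (a 6) (\<kappa> 1) (\<kappa> 3) (\<kappa> 6)
             + Gfun (a 2) (a 4) (a 5) (\<kappa> 2) (\<kappa> 4) (\<kappa> 5)"
proof -
  have nonzero: "\<alpha> 2 1 \<noteq> 0" "\<alpha> 1 2 \<noteq> 0" "\<alpha> 2 3 \<noteq> 0" "\<alpha> 1 4 \<noteq> 0"
    using lax_defined_alpha_nonvanishing[OF defined, of 2 3 6]
      lax_defined_alpha_nonvanishing[OF defined, of 1 4 5]
      lax_defined_alpha_nonvanishing[OF defined, of 2 1 6]
      lax_defined_alpha_nonvanishing[OF defined, of 1 2 5] gauge Z_alpha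
    unfolding atLeastAtMost_1_6 by auto
  have inj: "inj_on a {1..6}"
    using distinct by (auto simp: inj_on_def)
  have beta_zero: "\<forall>i\<in>{1,2}. \<forall>s\<in>{1..6}. \<beta> i s = 0"
    using gauge Z_beta unfolding atLeastAtMost_1_6 atLeastAtMost_1_4 by simp
  interpret Z: Z_point a \<kappa> \<alpha> \<beta>
    by unfold_locales (fact inj gauge(1-4) Z_alpha beta_zero nonzero)+
  have "\<forall>i\<in>{1,2}. \<forall>j\<in>{1..4}.
      ((\<lambda>t. Ham p4 p5 p6 p7 a b \<kappa> (\<alpha>(i := (\<alpha> i)(j := t))) \<beta>) has_field_derivative 0) (at (\<alpha> i j))"
    using Z.Ham_alpha_derivative by blast
  moreover have "\<forall>(i,j)\<in>{(1,1),(2,2),(1,3),(2,4)}.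
      ((\<lambda>t. Ham p4 p5 p6 p7 a b \<kappa> \<alpha> (\<beta>(i := (\<beta> i)(j := t)))) has_field_derivative 0) (at (\<beta> i j))"
    by (simp add: Z.Ham_beta_derivative)
  ultimately show ?thesis
    using Z.Ham_Z by blast
qed

end
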